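(* Let $n\ge 3$ and let $G_n$ be the directed graph whose vertex set is $S_n$ (permutations in one-line notation $[u(1),\dots,u(n)]$), with a directed edge $\mathbf{u}\to\mathbf{v}$ if and only if $\max_{i\in\{1,\dots,n\}}\bigl(v^{-1}(i)-u^{-1}(i)\bigr)=1$. If $D\subseteq S_n$ is a dominating set of $G_n$, i.e., every vertex $\mathbf{u}\notin D$ has an edge $\mathbf{u}\to\mathbf{v}$ to some $\mathbf{v}\in D$, then $$|D|\ \ge\ \frac{n!}{\frac{3}{4}\cdot 2^{n-1}}.$$
   Context: For a permutation $\mathbf{u}=[u(1),\dots,u(n)]$ in one-line notation, $u^{-1}(i)$ denotes the position of $i$ in the sequence. The quantity $\max_i(v^{-1}(i)-u^{-1}(i))$ is the rewriting cost of changing state $\mathbf{u}$ to state $\mathbf{v}$ via minimal-push-up operations. *)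

theory Defs
  imports Complex_Main "HOL-Combinatorics.Permutations"
begin

text \<open>A permutation u in one-line notation [u(1),...,u(n)] is a bijection of {1..n};
  u(k) is the entry at position k, and inv u i is the position of the value i.\<close>

definition Sn :: "nat \<Rightarrow> (nat \<Rightarrow> nat) set" where
  "Sn n = {u. u permutes {1..n}}"

definition rw_cost :: "nat \<Rightarrow> (nat \<Rightarrow> nat) \<Rightarrow> (nat \<Rightarrow> nat) \<Rightarrow> int" where
  "rw_cost n u v = Max ((\<lambda>i. int (inv v i) - int (inv u i)) ` {1..n})"

definition Gn_edge :: "nat \<Rightarrow> (nat \<Rightarrow> nat) \<Rightarrow> (nat \<Rightarrow> nat) \<Rightarrow> bool" where
  "Gn_edge n u v \<longleftrightarrow> u \<in> Sn n \<and> v \<in> Sn n \<and> rw_cost n u v = 1"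

definition dominating :: "nat \<Rightarrow> (nat \<Rightarrow> nat) set \<Rightarrow> bool" where
  "dominating n D \<longleftrightarrow> D \<subseteq> Sn n \<and> (\<forall>u \<in> Sn n - D. \<exists>v \<in> D. Gn_edge n u v)"

end

theory Submission
  imports Defs "HOL-Library.FuncSet"
begin

text \<open>
  Call \<open>N[v]\<close> the set consisting of \<open>v\<close> and all \<open>u\<close> with an edge \<open>u \<rightarrow> v\<close>; in \<open>u \<in> N[v]\<close> every
  value moves at most one position to the right, so choosing \<open>u(1), u(2), \<dots>\<close> in turn leaves at
  most two choices each time and \<open>|N[v]| \<le> 2^(n-1)\<close>. Group \<open>S_n\<close> into blocks of six permutations
  agreeing outside the last three positions. If \<open>N[v]\<close> meets a block, it contains exactly the four
  members not placing \<open>v(n)\<close> at position \<open>n - 2\<close>. Hence a dominating set needs two distinct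
  \<open>N[v]\<close> meeting each block, so \<open>8 n!/6 \<le> |D| 2^(n-1)\<close>.
\<close>

lemma permutes_eq_if_eq_off_point:
  assumes p: "p permutes S" and q: "q permutes S" and eq: "\<And>x. x \<in> S - {a} \<Longrightarrow> p x = q x"
  shows "p = q"
proof -
  have "inv p \<circ> q permutes {a}"
    using permutes_compose[OF q permutes_inv[OF p]]
    by (rule permutes_superset) (simp add: eq[symmetric] permutes_inverses[OF p])
  then have "inv p \<circ> q = id" by simp
  have "q = p \<circ> (inv p \<circ> q)"
    by (simp add: o_assoc permutes_inv_o[OF p])
  also have "\<dots> = p"
    using \<open>inv p \<circ> q = id\<close> by simp
  finally show ?thesis by simp
qed

lemma inj_comp_permutes:
  assumes "u permutes S"
  shows "inj (\<lambda>\<sigma>. u \<circ> \<sigma>)"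
proof (rule injI)
  fix \<sigma> \<tau> assume "u \<circ> \<sigma> = u \<circ> \<tau>"
  then have "(inv u \<circ> u) \<circ> \<sigma> = (inv u \<circ> u) \<circ> \<tau>"
    by (simp add: comp_assoc)
  then show "\<sigma> = \<tau>"
    by (simp add: permutes_inv_o[OF assms])
qed

lemma permutes_agreeing_off_eq_image:
  assumes u: "u permutes S" and "T \<subseteq> S"
  shows "{w. w permutes S \<and> (\<forall>x\<in>S - T. w x = u x)} = (\<lambda>\<sigma>. u \<circ> \<sigma>) ` {\<sigma>. \<sigma> permutes T}"
proof (intro equalityI subsetI)
  fix w assume "w \<in> {w. w permutes S \<and> (\<forall>x\<in>S - T. w x = u x)}"
  then have w: "w permutes S" "\<And>x. x \<in> S - T \<Longrightarrow> w x = u x" by auto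
  have "inv u \<circ> w permutes T"
    using permutes_compose[OF w(1) permutes_inv[OF u]]
    by (rule permutes_superset) (simp add: w(2) permutes_inverses[OF u])
  moreover have "w = u \<circ> (inv u \<circ> w)"
    by (simp add: o_assoc permutes_inv_o[OF u])
  ultimately show "w \<in> (\<lambda>\<sigma>. u \<circ> \<sigma>) ` {\<sigma>. \<sigma> permutes T}" by blast
next
  fix w assume "w \<in> (\<lambda>\<sigma>. u \<circ> \<sigma>) ` {\<sigma>. \<sigma> permutes T}"
  then obtain \<sigma> where \<sigma>: "\<sigma> permutes T" "w = u \<circ> \<sigma>" by blast
  then show "w \<in> {w. w permutes S \<and> (\<forall>x\<in>S - T. w x = u x)}"
    using assms permutes_compose[OF permutes_subset[OF \<sigma>(1)] u] permutes_not_in[OF \<sigma>(1)] by auto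
qed

lemma restrict_eq_restrict_iff: "restrict f A = restrict g A \<longleftrightarrow> (\<forall>x\<in>A. f x = g x)"
proof (intro iffI ballI restrict_ext)
  fix x assume "restrict f A = restrict g A" "x \<in> A"
  then have "restrict f A x = restrict g A x" by simp
  then show "f x = g x"
    using \<open>x \<in> A\<close> by simp
qed auto

lemma card_permutes_with_value:
  assumes "finite T" "a \<in> T" "b \<in> T"
  shows "card {\<sigma>. \<sigma> permutes T \<and> \<sigma> a = b} = fact (card T - 1)"
proof -
  have "{\<sigma>. \<sigma> permutes T \<and> \<sigma> a = b} = (\<lambda>\<tau>. transpose a b \<circ> \<tau>) ` {\<tau>. \<tau> permutes T - {a}}"
  proof (intro equalityI subsetI)
    fix \<sigma> assume "\<sigma> \<in> {\<sigma>. \<sigma> permutes T \<and> \<sigma> a = b}"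
    then have \<sigma>: "\<sigma> permutes T" "\<sigma> a = b" by auto
    have "transpose a b \<circ> \<sigma> permutes T"
      using permutes_compose[OF \<sigma>(1) permutes_swap_id[OF assms(2,3)]] .
    then have "transpose a b \<circ> \<sigma> permutes T - {a}"
      by (rule permutes_superset) (auto simp: \<sigma>(2))
    moreover have "\<sigma> = transpose a b \<circ> (transpose a b \<circ> \<sigma>)"
      by (simp add: o_assoc)
    ultimately show "\<sigma> \<in> (\<lambda>\<tau>. transpose a b \<circ> \<tau>) ` {\<tau>. \<tau> permutes T - {a}}" by blast
  next
    fix \<sigma> assume "\<sigma> \<in> (\<lambda>\<tau>. transpose a b \<circ> \<tau>) ` {\<tau>. \<tau> permutes T - {a}}"
    then obtain \<tau> where \<tau>: "\<tau> permutes T - {a}" "\<sigma> = transpose a b \<circ> \<tau>" by blast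
    then show "\<sigma> \<in> {\<sigma>. \<sigma> permutes T \<and> \<sigma> a = b}"
      using permutes_compose[OF permutes_subset[OF \<tau>(1)] permutes_swap_id[OF assms(2,3)]]
        permutes_not_in[OF \<tau>(1)] by auto
  qed
  moreover have "inj_on (\<lambda>\<tau>. transpose a b \<circ> \<tau>) {\<tau>. \<tau> permutes T - {a}}"
    using inj_comp_permutes[OF permutes_swap_id[OF assms(2,3)]] by (rule inj_on_subset) simp
  moreover have "card {\<tau>. \<tau> permutes T - {a}} = fact (card T - 1)"
    using assms by (intro card_permutations) auto
  ultimately show ?thesis
    by (simp add: card_image)
qed

lemma card_fibre_double_counting:
  fixes f :: "'a \<Rightarrow> 'k" and N :: "'b \<Rightarrow> 'a set" and a b :: nat
  assumes X: "finite X" and D: "finite D" and N: "\<And>v. v \<in> D \<Longrightarrow> N v \<subseteq> X"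
    and fibre_le: "\<And>x. x \<in> X \<Longrightarrow> card {y \<in> X. f y = f x} \<le> a"
    and fibre_cover: "\<And>x. x \<in> X \<Longrightarrow> b \<le> (\<Sum>v\<in>D. card {y \<in> N v. f y = f x})"
  shows "b * card X \<le> a * (\<Sum>v\<in>D. card (N v))"
proof -
  define K where "K = f ` X"
  have "card {y \<in> X. f y = \<kappa>} \<le> a" if "\<kappa> \<in> K" for \<kappa>
    using that fibre_le by (auto simp: K_def)
  then have "(\<Sum>\<kappa>\<in>K. card {y \<in> X. f y = \<kappa>}) \<le> card K * a"
    using sum_bounded_above[of K "\<lambda>\<kappa>. card {y \<in> X. f y = \<kappa>}" a] by simp
  moreover have "card X = (\<Sum>\<kappa>\<in>K. card {y \<in> X. f y = \<kappa>})"
    unfolding card_eq_sum K_def by (rule sum.group[symmetric]) (use X in auto)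
  ultimately have "b * card X \<le> (card K * b) * a"
    by (simp add: mult_le_mono2 ac_simps)
  also have "card K * b \<le> (\<Sum>\<kappa>\<in>K. \<Sum>v\<in>D. card {y \<in> N v. f y = \<kappa>})"
  proof -
    have "b \<le> (\<Sum>v\<in>D. card {y \<in> N v. f y = \<kappa>})" if "\<kappa> \<in> K" for \<kappa>
      using that fibre_cover by (auto simp: K_def)
    then show ?thesis
      using sum_bounded_below[of K b "\<lambda>\<kappa>. \<Sum>v\<in>D. card {y \<in> N v. f y = \<kappa>}"] by simp
  qed
  also have "(\<Sum>\<kappa>\<in>K. \<Sum>v\<in>D. card {y \<in> N v. f y = \<kappa>}) = (\<Sum>v\<in>D. \<Sum>\<kappa>\<in>K. card {y \<in> N v. f y = \<kappa>})"
    by (rule sum.swap)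
  also have "\<dots> = (\<Sum>v\<in>D. card (N v))"
  proof (rule sum.cong)
    fix v assume "v \<in> D"
    then show "(\<Sum>\<kappa>\<in>K. card {y \<in> N v. f y = \<kappa>}) = card (N v)"
      unfolding card_eq_sum using N X
      by (intro sum.group) (auto simp: K_def intro: rev_finite_subset)
  qed simp
  finally show ?thesis
    by (simp add: mult.commute)
qed

lemma finite_Sn: "finite (Sn n)"
  unfolding Sn_def by (rule finite_permutations) simp

lemma card_Sn: "card (Sn n) = fact n"
  unfolding Sn_def by (rule card_permutations) simp_all

text \<open>\<open>closed_in_nbhd n v\<close> is \<open>N[v]\<close>: the \<open>u\<close> with \<open>rw_cost n u v \<le> 1\<close>, i.e. the value at position \<open>k\<close>
  of \<open>u\<close> is at position at most \<open>k + 1\<close> in \<open>v\<close>.\<close>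

definition closed_in_nbhd :: "nat \<Rightarrow> (nat \<Rightarrow> nat) \<Rightarrow> (nat \<Rightarrow> nat) set" where
  "closed_in_nbhd n v = {u \<in> Sn n. \<forall>k\<in>{1..n}. inv v (u k) \<le> k + 1}"

lemma closed_in_nbhd_permutes: "u \<in> closed_in_nbhd n v \<Longrightarrow> u permutes {1..n}"
  by (simp add: closed_in_nbhd_def Sn_def)

lemma closed_in_nbhd_bound: "u \<in> closed_in_nbhd n v \<Longrightarrow> k \<in> {1..n} \<Longrightarrow> inv v (u k) \<le> k + 1"
  by (simp add: closed_in_nbhd_def)

lemma closed_in_nbhd_subset_Sn: "closed_in_nbhd n v \<subseteq> Sn n"
  by (simp add: closed_in_nbhd_def)

lemma finite_closed_in_nbhd: "finite (closed_in_nbhd n v)"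
  using finite_Sn closed_in_nbhd_subset_Sn by (rule rev_finite_subset)

lemma self_in_closed_in_nbhd: "v \<in> Sn n \<Longrightarrow> v \<in> closed_in_nbhd n v"
  by (simp add: closed_in_nbhd_def Sn_def permutes_inverses)

lemma Gn_edge_imp_in_closed_in_nbhd:
  assumes "Gn_edge n u v"
  shows "u \<in> closed_in_nbhd n v"
proof -
  have u: "u permutes {1..n}" and cost: "rw_cost n u v = 1"
    using assms by (auto simp: Gn_edge_def Sn_def)
  have "int (inv v (u k)) - int (inv u (u k)) \<le> rw_cost n u v" if "k \<in> {1..n}" for k
    unfolding rw_cost_def using that permutes_in_image[OF u] by (intro Max_ge) auto
  then have "inv v (u k) \<le> k + 1" if "k \<in> {1..n}" for k
    using that cost by (fastforce simp: permutes_inverses[OF u])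
  then show ?thesis
    using assms by (simp add: closed_in_nbhd_def Gn_edge_def)
qed

lemma dominating_imp_covered:
  assumes "dominating n D" "u \<in> Sn n"
  shows "\<exists>v\<in>D. u \<in> closed_in_nbhd n v"
  using assms self_in_closed_in_nbhd Gn_edge_imp_in_closed_in_nbhd
  unfolding dominating_def by blast

definition nbhd_agreeing :: "nat \<Rightarrow> (nat \<Rightarrow> nat) \<Rightarrow> nat \<Rightarrow> (nat \<Rightarrow> nat) \<Rightarrow> (nat \<Rightarrow> nat) set" where
  "nbhd_agreeing n v L w = {u \<in> closed_in_nbhd n v. \<forall>k\<in>{1..L}. u k = w k}"

lemma finite_nbhd_agreeing: "finite (nbhd_agreeing n v L w)"
  using finite_closed_in_nbhd by (rule rev_finite_subset) (auto simp: nbhd_agreeing_def)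

lemma card_nbhd_agreeing_last_le_1: "card (nbhd_agreeing n v (n - 1) w) \<le> 1"
proof -
  have "p = q" if "p \<in> nbhd_agreeing n v (n - 1) w" "q \<in> nbhd_agreeing n v (n - 1) w" for p q
    using that by (intro permutes_eq_if_eq_off_point[of p "{1..n}" q n])
      (auto simp: nbhd_agreeing_def closed_in_nbhd_def Sn_def)
  then show ?thesis
    using finite_nbhd_agreeing by (simp add: card_le_Suc0_iff_eq)
qed

lemma mem_image_if_inv_le:
  assumes "v permutes {1..n}" "x \<in> {1..n}" "inv v x \<le> m"
  shows "x \<in> v ` {1..m}"
proof -
  have "inv v x \<in> {1..n}"
    using assms(1,2) permutes_in_image[OF permutes_inv[OF assms(1)]] by blast
  then have "inv v x \<in> {1..m}"
    using assms(3) by simp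
  moreover have "x = v (inv v x)"
    by (simp add: permutes_inverses[OF assms(1)])
  ultimately show ?thesis
    by (intro image_eqI)
qed

lemma next_value_mem:
  assumes u: "u \<in> nbhd_agreeing n v L w" and v: "v \<in> Sn n" and L: "L < n"
  shows "u (Suc L) \<in> v ` {1..L + 2} - w ` {1..L}"
proof -
  have up: "u permutes {1..n}" and vp: "v permutes {1..n}"
    using u v by (auto simp: nbhd_agreeing_def closed_in_nbhd_def Sn_def)
  have "u (Suc L) \<in> {1..n}"
    using L permutes_in_image[OF up] by simp
  moreover have "inv v (u (Suc L)) \<le> L + 2"
    using u L closed_in_nbhd_bound[of u n v "Suc L"] by (simp add: nbhd_agreeing_def)
  ultimately have "u (Suc L) \<in> v ` {1..L + 2}"
    by (rule mem_image_if_inv_le[OF vp])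
  moreover have "u (Suc L) \<notin> u ` {1..L}"
    by (simp add: inj_image_mem_iff[OF permutes_inj[OF up]])
  moreover have "w ` {1..L} = u ` {1..L}"
    using u by (intro image_cong) (simp_all add: nbhd_agreeing_def)
  ultimately show ?thesis by simp
qed

text \<open>Entries \<open>1..L+1\<close> of any \<open>u \<in> N[v]\<close> lie among \<open>v(1..L+2)\<close>.\<close>

lemma card_next_values_le_2:
  assumes u: "u \<in> nbhd_agreeing n v L w" and v: "v \<in> Sn n" and L: "L < n"
  shows "card (v ` {1..L + 2} - w ` {1..L}) \<le> 2"
proof -
  have up: "u permutes {1..n}" and vp: "v permutes {1..n}"
    using u v by (auto simp: nbhd_agreeing_def closed_in_nbhd_def Sn_def)
  have w: "w ` {1..L} = u ` {1..L}"
    using u by (intro image_cong) (simp_all add: nbhd_agreeing_def)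
  have "card (u ` {1..L}) = L"
    using L by (subst card_image) (auto intro: inj_on_subset[OF permutes_inj_on[OF up]])
  moreover have "u ` {1..L} \<subseteq> v ` {1..L + 2}"
  proof
    fix x assume "x \<in> u ` {1..L}"
    then obtain k where k: "k \<in> {1..L}" "x = u k" by blast
    have "x \<in> {1..n}"
      using k L permutes_in_image[OF up] by auto
    moreover have "inv v (u k) \<le> k + 1"
      using u k L closed_in_nbhd_bound[of u n v k] by (simp add: nbhd_agreeing_def)
    with k have "inv v x \<le> L + 2" by simp
    ultimately show "x \<in> v ` {1..L + 2}"
      by (intro mem_image_if_inv_le[OF vp])
  qed
  moreover have "card (v ` {1..L + 2}) \<le> L + 2"
    using card_image_le[of "{1..L + 2}" v] by simp
  ultimately show ?thesis
    using w card_Diff_subset[of "u ` {1..L}" "v ` {1..L + 2}"] by simp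
qed

lemma card_nbhd_agreeing_step:
  assumes v: "v \<in> Sn n" and L: "L < n"
    and next_le: "\<And>w'. card (nbhd_agreeing n v (Suc L) w') \<le> K"
  shows "card (nbhd_agreeing n v L w) \<le> 2 * K"
proof (cases "nbhd_agreeing n v L w = {}")
  case False
  then obtain u where u: "u \<in> nbhd_agreeing n v L w" by blast
  define V where "V = v ` {1..L + 2} - w ` {1..L}"
  have "nbhd_agreeing n v L w \<subseteq> (\<Union>x\<in>V. nbhd_agreeing n v (Suc L) (w(Suc L := x)))"
  proof
    fix u' assume u': "u' \<in> nbhd_agreeing n v L w"
    then have "u' \<in> nbhd_agreeing n v (Suc L) (w(Suc L := u' (Suc L)))"
      by (auto simp: nbhd_agreeing_def le_Suc_eq)
    then show "u' \<in> (\<Union>x\<in>V. nbhd_agreeing n v (Suc L) (w(Suc L := x)))"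
      using next_value_mem[OF u' v L] unfolding V_def by blast
  qed
  then have "card (nbhd_agreeing n v L w)
      \<le> card (\<Union>x\<in>V. nbhd_agreeing n v (Suc L) (w(Suc L := x)))"
    by (intro card_mono finite_UN_I) (simp_all add: V_def finite_nbhd_agreeing)
  also have "\<dots> \<le> (\<Sum>x\<in>V. card (nbhd_agreeing n v (Suc L) (w(Suc L := x))))"
    by (rule card_UN_le) (simp add: V_def)
  also have "\<dots> \<le> card V * K"
    using sum_bounded_above[of V "\<lambda>x. card (nbhd_agreeing n v (Suc L) (w(Suc L := x)))" K] next_le
    by simp
  also have "\<dots> \<le> 2 * K"
    using card_next_values_le_2[OF u v L] by (simp add: V_def)
  finally show ?thesis .
qed simp

lemma card_nbhd_agreeing_le:
  assumes "L \<le> n - 1" and v: "v \<in> Sn n"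
  shows "card (nbhd_agreeing n v L w) \<le> 2 ^ (n - 1 - L)"
  using assms(1)
proof (induction L arbitrary: w rule: inc_induct)
  case base
  then show ?case using card_nbhd_agreeing_last_le_1 by simp
next
  case (step L)
  then have "card (nbhd_agreeing n v L w) \<le> 2 * 2 ^ (n - 1 - Suc L)"
    by (intro card_nbhd_agreeing_step[OF v]) simp_all
  moreover have "n - 1 - L = Suc (n - 1 - Suc L)"
    using step.hyps by simp
  ultimately show ?case by simp
qed

lemma card_closed_in_nbhd_le:
  assumes "v \<in> Sn n"
  shows "card (closed_in_nbhd n v) \<le> 2 ^ (n - 1)"
  using card_nbhd_agreeing_le[OF _ assms, of 0] by (simp add: nbhd_agreeing_def)

definition block :: "nat \<Rightarrow> (nat \<Rightarrow> nat) \<Rightarrow> (nat \<Rightarrow> nat) set" where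
  "block n u = {w \<in> Sn n. restrict w {1..n - 3} = restrict u {1..n - 3}}"

lemma block_eq_image:
  assumes "n \<ge> 3" "u \<in> Sn n"
  shows "block n u = (\<lambda>\<sigma>. u \<circ> \<sigma>) ` {\<sigma>. \<sigma> permutes {n - 2..n}}"
proof -
  have "{1..n} - {n - 2..n} = {1..n - 3}"
    using assms(1) by auto
  then have "block n u = {w. w permutes {1..n} \<and> (\<forall>x\<in>{1..n} - {n - 2..n}. w x = u x)}"
    by (simp add: block_def Sn_def restrict_eq_restrict_iff)
  also have "\<dots> = (\<lambda>\<sigma>. u \<circ> \<sigma>) ` {\<sigma>. \<sigma> permutes {n - 2..n}}"
    using assms by (intro permutes_agreeing_off_eq_image) (auto simp: Sn_def)
  finally show ?thesis .
qed

lemma card_block: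
  assumes "n \<ge> 3" "u \<in> Sn n"
  shows "card (block n u) = 6"
proof -
  have "card {\<sigma>. \<sigma> permutes {n - 2..n}} = fact 3"
    using assms(1) by (intro card_permutations) auto
  moreover have "inj_on (\<lambda>\<sigma>. u \<circ> \<sigma>) {\<sigma>. \<sigma> permutes {n - 2..n}}"
    using inj_comp_permutes assms(2) by (auto simp: Sn_def intro: inj_on_subset)
  ultimately show ?thesis
    using assms by (simp add: block_eq_image card_image fact_numeral)
qed

lemma inv_last_value_mem:
  assumes "v \<in> Sn n" "u \<in> closed_in_nbhd n v" "n \<ge> 1"
  shows "inv u (v n) \<in> {n - 1..n}"
proof -
  have u: "u permutes {1..n}" and v: "v permutes {1..n}"
    using assms(1,2) closed_in_nbhd_permutes by (auto simp: Sn_def)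
  define p where "p = inv u (v n)"
  have p: "p \<in> {1..n}"
    using assms(3) permutes_in_image[OF v] permutes_in_image[OF permutes_inv[OF u]]
    by (simp add: p_def)
  have "n \<le> p + 1"
    using closed_in_nbhd_bound[OF assms(2) p]
    by (simp add: p_def permutes_inverses[OF u] permutes_inverses[OF v])
  with p show ?thesis by (simp add: p_def)
qed

lemma comp_in_closed_in_nbhd_iff:
  assumes n: "n \<ge> 3" and v: "v \<in> Sn n" and u: "u \<in> closed_in_nbhd n v"
    and \<sigma>: "\<sigma> permutes {n - 2..n}"
  shows "u \<circ> \<sigma> \<in> closed_in_nbhd n v \<longleftrightarrow> \<sigma> (n - 2) \<noteq> inv u (v n)"
proof -
  have up: "u permutes {1..n}" and vp: "v permutes {1..n}"
    using u v closed_in_nbhd_permutes by (auto simp: Sn_def)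
  have \<sigma>': "\<sigma> permutes {1..n}"
    using n by (intro permutes_subset[OF \<sigma>]) auto
  have last_pos: "inv v (u (\<sigma> (n - 2))) = n \<longleftrightarrow> \<sigma> (n - 2) = inv u (v n)"
    using permutes_inv_eq[OF vp, of "u (\<sigma> (n - 2))" n] permutes_inv_eq[OF up, of "v n" "\<sigma> (n - 2)"]
    by argo
  show ?thesis
  proof
    assume "u \<circ> \<sigma> \<in> closed_in_nbhd n v"
    then have "inv v (u (\<sigma> (n - 2))) \<le> n - 2 + 1"
      using n closed_in_nbhd_bound[of "u \<circ> \<sigma>" n v "n - 2"] by simp
    then show "\<sigma> (n - 2) \<noteq> inv u (v n)"
      using last_pos n by auto
  next
    assume ne: "\<sigma> (n - 2) \<noteq> inv u (v n)"
    have "inv v (u (\<sigma> k)) \<le> k + 1" if k: "k \<in> {1..n}" for k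
    proof (cases "k \<in> {n - 2..n}")
      case False
      then show ?thesis
        using closed_in_nbhd_bound[OF u k] permutes_not_in[OF \<sigma>] by simp
    next
      case True
      have "inv v (u (\<sigma> k)) \<in> {1..n}"
        using k permutes_in_image[OF \<sigma>'] permutes_in_image[OF up]
          permutes_in_image[OF permutes_inv[OF vp]] by simp
      then show ?thesis
        using True ne last_pos by (cases "k = n - 2") auto
    qed
    then show "u \<circ> \<sigma> \<in> closed_in_nbhd n v"
      using permutes_compose[OF \<sigma>' up] by (simp add: closed_in_nbhd_def Sn_def)
  qed
qed

lemma card_block_inter_closed_in_nbhd:
  assumes n: "n \<ge> 3" and v: "v \<in> Sn n" and u: "u \<in> closed_in_nbhd n v"
  shows "card (block n u \<inter> closed_in_nbhd n v) = 4"
proof -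
  define T where "T = {n - 2..n}"
  define p where "p = inv u (v n)"
  have uS: "u \<in> Sn n"
    using u closed_in_nbhd_subset_Sn by blast
  have T: "finite T" "card T = 3" "n - 2 \<in> T" "p \<in> T"
    using n inv_last_value_mem[OF v u] by (auto simp: T_def p_def)
  have "block n u \<inter> closed_in_nbhd n v = (\<lambda>\<sigma>. u \<circ> \<sigma>) ` {\<sigma>. \<sigma> permutes T \<and> \<sigma> (n - 2) \<noteq> p}"
    using comp_in_closed_in_nbhd_iff[OF n v u] by (auto simp: block_eq_image[OF n uS] T_def p_def)
  moreover have "inj_on (\<lambda>\<sigma>. u \<circ> \<sigma>) {\<sigma>. \<sigma> permutes T \<and> \<sigma> (n - 2) \<noteq> p}"
    using inj_comp_permutes[OF closed_in_nbhd_permutes[OF u]] by (auto intro: inj_on_subset)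
  moreover have "{\<sigma>. \<sigma> permutes T \<and> \<sigma> (n - 2) \<noteq> p}
      = {\<sigma>. \<sigma> permutes T} - {\<sigma>. \<sigma> permutes T \<and> \<sigma> (n - 2) = p}"
    by auto
  moreover have "card ({\<sigma>. \<sigma> permutes T} - {\<sigma>. \<sigma> permutes T \<and> \<sigma> (n - 2) = p}) = fact 3 - fact 2"
    using T finite_permutations[OF T(1)]
    by (subst card_Diff_subset) (auto intro: rev_finite_subset simp: card_permutations card_permutes_with_value)
  ultimately show ?thesis
    by (simp add: card_image fact_numeral)
qed

lemma sum_card_block_inter_ge_8:
  assumes n: "n \<ge> 3" and D: "dominating n D" and u: "u \<in> Sn n"
  shows "8 \<le> (\<Sum>v\<in>D. card (block n u \<inter> closed_in_nbhd n v))"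
proof -
  have DS: "D \<subseteq> Sn n"
    using D by (simp add: dominating_def)
  obtain v1 where v1: "v1 \<in> D" "u \<in> closed_in_nbhd n v1"
    using dominating_imp_covered[OF D u] by blast
  have c1: "card (block n u \<inter> closed_in_nbhd n v1) = 4"
    using card_block_inter_closed_in_nbhd[OF n _ v1(2)] v1(1) DS by blast
  then have "block n u \<inter> closed_in_nbhd n v1 \<noteq> block n u"
    using card_block[OF n u] by auto
  then obtain w where w: "w \<in> block n u" "w \<notin> closed_in_nbhd n v1"
    by blast
  have wS: "w \<in> Sn n" and same_block: "block n w = block n u"
    using w(1) by (auto simp: block_def)
  obtain v2 where v2: "v2 \<in> D" "w \<in> closed_in_nbhd n v2"
    using dominating_imp_covered[OF D wS] by blast
  have c2: "card (block n u \<inter> closed_in_nbhd n v2) = 4"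
    using card_block_inter_closed_in_nbhd[OF n _ v2(2)] v2(1) DS same_block by auto
  have "v1 \<noteq> v2"
    using v2(2) w(2) by auto
  then have "8 = (\<Sum>v\<in>{v1, v2}. card (block n u \<inter> closed_in_nbhd n v))"
    using c1 c2 by simp
  also have "\<dots> \<le> (\<Sum>v\<in>D. card (block n u \<inter> closed_in_nbhd n v))"
    using v1(1) v2(1) rev_finite_subset[OF finite_Sn DS] by (intro sum_mono2) auto
  finally show ?thesis .
qed

lemma fact_le_sum_card_closed_in_nbhd:
  assumes n: "n \<ge> 3" and D: "dominating n D"
  shows "8 * fact n \<le> 6 * (\<Sum>v\<in>D. card (closed_in_nbhd n v))"
proof -
  have DS: "D \<subseteq> Sn n"
    using D by (simp add: dominating_def)
  have "8 * card (Sn n) \<le> 6 * (\<Sum>v\<in>D. card (closed_in_nbhd n v))"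
  proof (rule card_fibre_double_counting[where f = "\<lambda>w. restrict w {1..n - 3}"])
    fix u assume u: "u \<in> Sn n"
    show "card {w \<in> Sn n. restrict w {1..n - 3} = restrict u {1..n - 3}} \<le> 6"
      using card_block[OF n u] by (simp add: block_def)
    have "{w \<in> closed_in_nbhd n v. restrict w {1..n - 3} = restrict u {1..n - 3}}
        = block n u \<inter> closed_in_nbhd n v" for v
      using closed_in_nbhd_subset_Sn by (auto simp: block_def)
    then show "8 \<le> (\<Sum>v\<in>D. card {w \<in> closed_in_nbhd n v. restrict w {1..n - 3} = restrict u {1..n - 3}})"
      using sum_card_block_inter_ge_8[OF n D u] by simp
  qed (use finite_Sn DS closed_in_nbhd_subset_Sn in \<open>auto intro: rev_finite_subset\<close>)
  then show ?thesis
    by (simp add: card_Sn)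
qed

theorem theorem4:
  fixes n :: nat and D :: "(nat \<Rightarrow> nat) set"
  assumes "n \<ge> 3" and "dominating n D"
  shows "real (card D) \<ge> (fact n :: real) / (3 / 4 * 2 ^ (n - 1))"
proof -
  have "D \<subseteq> Sn n"
    using assms(2) by (simp add: dominating_def)
  then have "(\<Sum>v\<in>D. card (closed_in_nbhd n v)) \<le> (\<Sum>v\<in>D. 2 ^ (n - 1))"
    by (intro sum_mono card_closed_in_nbhd_le) blast
  then have "8 * fact n \<le> 6 * (card D * 2 ^ (n - 1))"
    using fact_le_sum_card_closed_in_nbhd[OF assms] by simp
  then have "8 * (fact n :: real) \<le> 6 * (real (card D) * 2 ^ (n - 1))"
    using of_nat_le_iff[of "8 * fact n" "6 * (card D * 2 ^ (n - 1))", where 'a = real] by simp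
  then show ?thesis
    by (simp add: divide_le_eq)
qed

end
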